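(* Let $d\ge1$ and let $\Psi$, $B$, $b$ satisfy the standing assumptions (A1)–(A4) in the context, and for $h>0$ let $b_h(t,x)=\frac{b(t,x)}{1+h|b(t,x)|}$. Then there exists $h_{\max}>0$ such that $$\lim_{r\to\infty}\ \sup_{|x|\ge r,\ t\ge0,\ 0<h\le h_{\max}}\Big(2\Big\langle\frac{x}{|x|},b_h(t,x)\Big\rangle+\frac{h}{|x|}|b_h(t,x)|^2\Big)<0.$$
   Context: $|\cdot|$ is the Euclidean norm on vectors and the operator norm on matrices; $a\vee b=\max\{a,b\}$; $\operatorname{div}B$ is the row-wise divergence $(\operatorname{div}B)_i=\sum_j\partial_{x_j}B_{ij}$. Standing assumptions: (A1) $\Psi\in C^2(\mathbb{R}^d)$, $\nabla\Psi$ $L$-Lipschitz, $\nabla\Psi(0)=0$. (A2) $B:[0,\infty)\times\mathbb{R}^d\to\mathbb{R}^{d\times d}$ symmetric with $\beta_lI\preceq B(t,x)\preceq\beta_uI$, $\beta_l,\beta_u>0$. (A3) $B$ is $C^2$ in $x$ and there are $L,n_B>0$, $\delta\ge1/2$ with, for all $x,y$, $s,t>0$: $|B(t,x)-B(t,y)|\vee|\operatorname{div}B(t,x)-\operatorname{div}B(t,y)|\le L(1+|x|^{n_B}+|y|^{n_B})|x-y|$ and $|B(s,x)-B(t,x)|\vee|\operatorname{div}B(s,x)-\operatorname{div}B(t,x)|\le L(1+|x|^{n_B})|s-t|^\delta$. (A4) $b(t,x)=-B(t,x)\nabla\Psi(x)+\operatorname{div}B(t,x)$ satisfies $\lim_{r\to\infty}\sup_{|x|\ge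 r,t\ge0}\langle\frac{x}{|x|},\frac{b(t,x)}{|b(t,x)|}\rangle<0$ and $\lim_{r\to\infty}\inf_{|x|\ge r,t\ge0}|b(t,x)|=\infty$. *)

theory Defs
  imports "HOL-Analysis.Analysis"
begin

definition C1_map :: "('a::euclidean_space \<Rightarrow> 'b::real_normed_vector) \<Rightarrow> bool" where
  "C1_map f \<longleftrightarrow> (\<exists>f'. (\<forall>x. (f has_derivative blinfun_apply (f' x)) (at x)) \<and> continuous_on UNIV f')"

definition C2_map :: "('a::euclidean_space \<Rightarrow> 'b::real_normed_vector) \<Rightarrow> bool" where
  "C2_map f \<longleftrightarrow> (\<exists>f'. (\<forall>x. (f has_derivative blinfun_apply (f' x)) (at x)) \<and> C1_map f')"

definition grad :: "(real^'n \<Rightarrow> real) \<Rightarrow> real^'n \<Rightarrow> real^'n" where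
  "grad f x = (\<chi> i. frechet_derivative f (at x) (axis i 1))"

definition mdiv :: "(real^'n \<Rightarrow> real^'n^'n) \<Rightarrow> real^'n \<Rightarrow> real^'n" where
  "mdiv A x = (\<chi> i. \<Sum>j\<in>UNIV. frechet_derivative (\<lambda>y. A y $ i $ j) (at x) (axis j 1))"

definition opnorm :: "real^'n^'n \<Rightarrow> real" where
  "opnorm A = onorm (\<lambda>v. A *v v)"

definition drift :: "(real \<Rightarrow> real^'n \<Rightarrow> real^'n^'n) \<Rightarrow> (real^'n \<Rightarrow> real) \<Rightarrow> real \<Rightarrow> real^'n \<Rightarrow> real^'n" where
  "drift B Psi t x = - (B t x *v grad Psi x) + mdiv (B t) x"

definition tamed :: "real \<Rightarrow> (real \<Rightarrow> real^'n \<Rightarrow> real^'n) \<Rightarrow> real \<Rightarrow> real^'n \<Rightarrow> real^'n" where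
  "tamed h b t x = (1 / (1 + h * norm (b t x))) *\<^sub>R b t x"

end

theory Submission
  imports Defs
begin

text \<open>Write \<open>s = |b| / (1 + h|b|)\<close> for the length of the tamed vector. Far out, the
  radial component of \<open>b\<close> is at most \<open>-c|b|\<close>, so the first term is at most \<open>-2cs\<close>;
  since \<open>hs < 1\<close>, the correction term \<open>(h/|x|) s\<^sup>2\<close> is at most \<open>s/|x| \<le> cs\<close> once
  \<open>|x| \<ge> 1/c\<close>. Hence the whole expression is at most \<open>-cs\<close>, and \<open>s \<ge> 1/2\<close> as soon
  as \<open>|b| \<ge> 1\<close> and \<open>h \<le> 1\<close>, which (A4) guarantees far out. So \<open>h\<^sub>m\<^sub>a\<^sub>x = 1\<close> works:
  the supremum over \<open>|x| \<ge> r\<close> is antitone in \<open>r\<close>, hence converges, and it is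
  eventually below \<open>-c/2\<close>. Only (A4) enters.\<close>

lemma tamed_radial_bound:
  fixes u b :: "'a::real_inner" and h \<rho> c :: real
  assumes "1 \<le> norm b" "0 < h" "h \<le> 1" "0 < \<rho>" "1 / \<rho> \<le> c"
    and radial: "u \<bullet> (1 / norm b) *\<^sub>R b \<le> - c"
  shows "2 * (u \<bullet> (1 / (1 + h * norm b)) *\<^sub>R b)
           + h / \<rho> * (norm ((1 / (1 + h * norm b)) *\<^sub>R b))\<^sup>2 \<le> - c / 2"
proof -
  define s where "s = norm b / (1 + h * norm b)"
  have den: "1 + h * norm b > 0"
    using assms by (simp add: add_pos_nonneg)
  have c: "c > 0"
    using divide_pos_pos[of 1 \<rho>] assms(4,5) by linarith
  have s_pos: "s > 0"
    unfolding s_def using den assms by (intro divide_pos_pos) auto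
  have hs: "h * s < 1"
    unfolding s_def using den by (simp add: divide_less_eq)
  have "h * norm b \<le> norm b"
    using assms(2,3) by (simp add: mult_left_le_one_le)
  then have s_half: "1 / 2 \<le> s"
    unfolding s_def using den assms(1) by (simp add: divide_simps)
  have "0 < norm b"
    using assms(1) by linarith
  then have "u \<bullet> b \<le> - c * norm b"
    using radial by (simp add: inner_scaleR_right pos_divide_le_eq)
  then have first: "2 * (u \<bullet> (1 / (1 + h * norm b)) *\<^sub>R b) \<le> - 2 * (c * s)"
    unfolding s_def using den by (simp add: inner_scaleR_right divide_simps)
  have "h / \<rho> * s\<^sup>2 = s * ((h * s) * (1 / \<rho>))"
    by (simp add: power2_eq_square)
  also have "\<dots> \<le> s * c"
  proof (rule mult_left_mono)
    have "(h * s) * (1 / \<rho>) \<le> 1 / \<rho>"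
      using hs s_pos assms by (intro mult_left_le_one_le) auto
    then show "(h * s) * (1 / \<rho>) \<le> c"
      using assms by linarith
  qed (use s_pos in simp)
  finally have second: "h / \<rho> * s\<^sup>2 \<le> c * s"
    by (simp add: mult.commute)
  have norm_tamed: "norm ((1 / (1 + h * norm b)) *\<^sub>R b) = s"
    unfolding s_def using den by simp
  have "2 * (u \<bullet> (1 / (1 + h * norm b)) *\<^sub>R b)
           + h / \<rho> * (norm ((1 / (1 + h * norm b)) *\<^sub>R b))\<^sup>2 \<le> - (c * s)"
    unfolding norm_tamed using first second by linarith
  also have "\<dots> \<le> - c / 2"
    using s_half c by simp
  finally show ?thesis .
qed

lemma antimono_tendsto_INF_at_top:
  fixes f :: "'a::linorder \<Rightarrow> 'b::{complete_linorder,linorder_topology}"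
  assumes "antimono f"
  shows "(f \<longlongrightarrow> (INF r. f r)) at_top"
proof (rule decreasing_tendsto)
  show "eventually (\<lambda>r. (INF r. f r) \<le> f r) at_top"
    by (simp add: INF_lower)
next
  fix a assume "(INF r. f r) < a"
  then obtain r0 where "f r0 < a"
    by (auto simp: INF_less_iff)
  then show "eventually (\<lambda>r. f r < a) at_top"
    using assms unfolding eventually_at_top_linorder antimono_def
    by (meson order_le_less_trans)
qed

lemma eventually_all_less_of_SUP_tendsto:
  fixes g :: "'a \<Rightarrow> 'b::{complete_linorder,linorder_topology}"
  assumes "((\<lambda>r. SUP p\<in>S r. g p) \<longlongrightarrow> l) F" "l < c"
  shows "eventually (\<lambda>r. \<forall>p\<in>S r. g p < c) F"
  using order_tendstoD(2)[OF assms] by eventually_elim (auto dest: SUP_lessD)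

lemma eventually_all_greater_of_INF_tendsto:
  fixes g :: "'a \<Rightarrow> 'b::{complete_linorder,linorder_topology}"
  assumes "((\<lambda>r. INF p\<in>S r. g p) \<longlongrightarrow> l) F" "c < l"
  shows "eventually (\<lambda>r. \<forall>p\<in>S r. c < g p) F"
  using order_tendstoD(1)[OF assms] by eventually_elim (auto dest: less_INF_D)

lemma eventually_radial_drift_bounds:
  fixes b :: "real \<Rightarrow> 'a::real_inner \<Rightarrow> 'a"
  assumes dir: "\<exists>l::ereal. ((\<lambda>r. SUP (x, t)\<in>{(x, t). r \<le> norm x \<and> 0 \<le> t}.
        ereal ((1 / norm x) *\<^sub>R x \<bullet> (1 / norm (b t x)) *\<^sub>R b t x)) \<longlongrightarrow> l) at_top \<and> l < 0"
    and grow: "((\<lambda>r. INF (x, t)\<in>{(x, t). r \<le> norm x \<and> 0 \<le> t}.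
        ereal (norm (b t x))) \<longlongrightarrow> \<infinity>) at_top"
  obtains c R where "0 < c"
    "\<And>x t. R \<le> norm x \<Longrightarrow> 0 \<le> t \<Longrightarrow>
       (1 / norm x) *\<^sub>R x \<bullet> (1 / norm (b t x)) *\<^sub>R b t x < - c \<and> 1 < norm (b t x)"
proof -
  obtain l where l: "((\<lambda>r. SUP (x, t)\<in>{(x, t). r \<le> norm x \<and> 0 \<le> t}.
      ereal ((1 / norm x) *\<^sub>R x \<bullet> (1 / norm (b t x)) *\<^sub>R b t x)) \<longlongrightarrow> l) at_top" "l < 0"
    using dir by blast
  obtain q :: real where q: "l < ereal q" "q < 0"
    using ereal_dense2[OF l(2)] by auto
  have "eventually (\<lambda>r. \<forall>x t. r \<le> norm x \<and> 0 \<le> t \<longrightarrow>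
      (1 / norm x) *\<^sub>R x \<bullet> (1 / norm (b t x)) *\<^sub>R b t x < q \<and> 1 < norm (b t x)) at_top"
    using eventually_all_less_of_SUP_tendsto[OF l(1) q(1)]
      eventually_all_greater_of_INF_tendsto[OF grow, of 1, simplified]
    by eventually_elim auto
  then obtain R where "\<And>x t. R \<le> norm x \<Longrightarrow> 0 \<le> t \<Longrightarrow>
      (1 / norm x) *\<^sub>R x \<bullet> (1 / norm (b t x)) *\<^sub>R b t x < q \<and> 1 < norm (b t x)"
    unfolding eventually_at_top_linorder by blast
  then show thesis
    using that[of "- q" R] q(2) by simp
qed

lemma tamed_radial_SUP_le:
  fixes b :: "real \<Rightarrow> real^'n \<Rightarrow> real^'n"
  assumes "0 < c" "R \<le> r" "1 / c \<le> r"
    and bounds: "\<And>x t. R \<le> norm x \<Longrightarrow> 0 \<le> t \<Longrightarrow>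
       (1 / norm x) *\<^sub>R x \<bullet> (1 / norm (b t x)) *\<^sub>R b t x < - c \<and> 1 < norm (b t x)"
  shows "(SUP (x, t, h)\<in>{(x, t, h). r \<le> norm x \<and> 0 \<le> t \<and> 0 < h \<and> h \<le> 1}.
      ereal (2 * ((1 / norm x) *\<^sub>R x \<bullet> tamed h b t x) + h / norm x * (norm (tamed h b t x))\<^sup>2))
    \<le> ereal (- c / 2)"
proof (intro SUP_least, clarify)
  fix x :: "real^'n" and t h :: real
  assume x: "r \<le> norm x" and t: "0 \<le> t" and h: "0 < h" "h \<le> 1"
  have xc: "1 / c \<le> norm x"
    using x assms(3) by linarith
  moreover have "0 < 1 / c"
    using assms(1) by simp
  ultimately have "0 < norm x"
    by linarith
  moreover have "1 / norm x \<le> c"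
    using xc assms(1) \<open>0 < norm x\<close> by (simp add: divide_simps mult.commute)
  moreover have "1 < norm (b t x)" "(1 / norm x) *\<^sub>R x \<bullet> (1 / norm (b t x)) *\<^sub>R b t x \<le> - c"
    using bounds[of x t] x t assms(2) by auto
  ultimately show "ereal (2 * ((1 / norm x) *\<^sub>R x \<bullet> tamed h b t x)
      + h / norm x * (norm (tamed h b t x))\<^sup>2) \<le> ereal (- c / 2)"
    using h unfolding tamed_def ereal_less_eq(3) by (intro tamed_radial_bound) auto
qed

lemma tamed_drift_radial_limit:
  fixes b :: "real \<Rightarrow> real^'n \<Rightarrow> real^'n"
  assumes dir: "\<exists>l::ereal. ((\<lambda>r. SUP (x, t)\<in>{(x, t). r \<le> norm x \<and> 0 \<le> t}.
        ereal ((1 / norm x) *\<^sub>R x \<bullet> (1 / norm (b t x)) *\<^sub>R b t x)) \<longlongrightarrow> l) at_top \<and> l < 0"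
    and grow: "((\<lambda>r. INF (x, t)\<in>{(x, t). r \<le> norm x \<and> 0 \<le> t}.
        ereal (norm (b t x))) \<longlongrightarrow> \<infinity>) at_top"
  shows "\<exists>l::ereal.
    ((\<lambda>r. SUP (x, t, h)\<in>{(x, t, h). r \<le> norm x \<and> 0 \<le> t \<and> 0 < h \<and> h \<le> 1}.
        ereal (2 * ((1 / norm x) *\<^sub>R x \<bullet> tamed h b t x) + h / norm x * (norm (tamed h b t x))\<^sup>2))
      \<longlongrightarrow> l) at_top \<and> l < 0"
proof -
  define F where "F = (\<lambda>r. SUP (x, t, h)\<in>{(x, t, h). r \<le> norm x \<and> 0 \<le> t \<and> 0 < h \<and> h \<le> 1}.
    ereal (2 * ((1 / norm x) *\<^sub>R x \<bullet> tamed h b t x) + h / norm x * (norm (tamed h b t x))\<^sup>2))"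
  obtain c R where c: "0 < c" and bounds: "\<And>x t. R \<le> norm x \<Longrightarrow> 0 \<le> t \<Longrightarrow>
      (1 / norm x) *\<^sub>R x \<bullet> (1 / norm (b t x)) *\<^sub>R b t x < - c \<and> 1 < norm (b t x)"
    using eventually_radial_drift_bounds[OF dir grow] by blast
  define r0 where "r0 = max R (1 / c)"
  have "F r0 \<le> ereal (- c / 2)"
    unfolding F_def using c bounds by (intro tamed_radial_SUP_le) (auto simp: r0_def)
  also have "\<dots> < 0"
    using c by simp
  finally have "(INF r. F r) < 0"
    by (meson INF_lower UNIV_I le_less_trans)
  moreover have "antimono F"
    unfolding F_def antimono_def by (auto intro!: SUP_subset_mono)
  ultimately show ?thesis
    using antimono_tendsto_INF_at_top unfolding F_def by blast
qed

theorem lemma12: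
  fixes Psi :: "real^'n \<Rightarrow> real"
    and B :: "real \<Rightarrow> real^'n \<Rightarrow> real^'n^'n"
    and L nB \<delta> \<beta>l \<beta>u :: real
  assumes A1_C2: "C2_map Psi"
    and A1_Lip: "\<forall>x y. norm (grad Psi x - grad Psi y) \<le> L * norm (x - y)"
    and A1_zero: "grad Psi 0 = 0"
    and A2_sym: "\<forall>t x. 0 \<le> t \<longrightarrow> transpose (B t x) = B t x"
    and A2_pos: "\<beta>l > 0" "\<beta>u > 0"
    and A2_bounds: "\<forall>t x v. 0 \<le> t \<longrightarrow>
        \<beta>l * (v \<bullet> v) \<le> v \<bullet> (B t x *v v) \<and> v \<bullet> (B t x *v v) \<le> \<beta>u * (v \<bullet> v)"
    and A3_C2: "\<forall>t. 0 \<le> t \<longrightarrow> C2_map (B t)"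
    and A3_const: "L > 0" "nB > 0" "\<delta> \<ge> 1/2"
    and A3_x: "\<forall>x y t. 0 < t \<longrightarrow>
        max (opnorm (B t x - B t y)) (norm (mdiv (B t) x - mdiv (B t) y))
          \<le> L * (1 + norm x powr nB + norm y powr nB) * norm (x - y)"
    and A3_t: "\<forall>x s t. 0 < s \<longrightarrow> 0 < t \<longrightarrow>
        max (opnorm (B s x - B t x)) (norm (mdiv (B s) x - mdiv (B t) x))
          \<le> L * (1 + norm x powr nB) * \<bar>s - t\<bar> powr \<delta>"
    and A4_dir: "\<exists>l::ereal. ((\<lambda>r. SUP (x, t)\<in>{(x, t). r \<le> norm x \<and> 0 \<le> t}.
        ereal ((1 / norm x) *\<^sub>R x \<bullet> (1 / norm (drift B Psi t x)) *\<^sub>R drift B Psi t x))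
          \<longlongrightarrow> l) at_top \<and> l < 0"
    and A4_grow: "((\<lambda>r. INF (x, t)\<in>{(x, t). r \<le> norm x \<and> 0 \<le> t}.
        ereal (norm (drift B Psi t x))) \<longlongrightarrow> \<infinity>) at_top"
  shows "\<exists>hmax > 0. \<exists>l::ereal.
    ((\<lambda>r. SUP (x, t, h)\<in>{(x, t, h). r \<le> norm x \<and> 0 \<le> t \<and> 0 < h \<and> h \<le> hmax}.
        ereal (2 * ((1 / norm x) *\<^sub>R x \<bullet> tamed h (drift B Psi) t x)
               + h / norm x * (norm (tamed h (drift B Psi) t x))^2))
      \<longlongrightarrow> l) at_top \<and> l < 0"
  using tamed_drift_radial_limit[OF A4_dir A4_grow] by (intro exI[of _ 1]) auto

end
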